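(* Let $\mathcal{V},\bar{\mathcal{V}}$ be disjoint finite sets with $|\mathcal{V}|=N$, $|\bar{\mathcal{V}}|=M$, and let $G:2^{\mathcal{V}\cup\bar{\mathcal{V}}}\to\mathbb{R}$ be a submodular, nonnegative set function with $G(\emptyset)=0$ and $G(\mathcal{V}\cup\bar{\mathcal{V}})=0$, with Lovász extension $g(\mathbf{x},\bar{\mathbf{x}})$ ($\mathbf{x}\in\mathbb{R}^N$ indexed by $\mathcal{V}$, $\bar{\mathbf{x}}\in\mathbb{R}^M$ indexed by $\bar{\mathcal{V}}$). Let $\mathbf{x}\in\mathbb{R}^N$ have minimum entry $a$ and maximum entry $b$. Then $g(\mathbf{x},\bar{\mathbf{x}})\ge g(\mathbf{x},\mathcal{P}_{a,b}(\bar{\mathbf{x}}))$ for every $\bar{\mathbf{x}}\in\mathbb{R}^M$. Consequently, for any $a'<a$ and $b'>b$, $$\min_{\bar{\mathbf{x}}\in\mathbb{R}^M}g(\mathbf{x},\bar{\mathbf{x}})=\min_{\bar{\mathbf{x}}\in[a',b']^M}g(\mathbf{x},\bar{\mathbf{x}})=\min_{\bar{\mathbf{x}}\in[a,b]^M}g(\mathbf{x},\bar{\mathbf{x}}).$$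
   Context: Lovász extension: for a set function $F:2^{[n]}\to\mathbb{R}$ with $F(\emptyset)=0$, and $\mathbf{x}\in\mathbb{R}^n$ with entries sorted as $x_{i_1}\ge\cdots\ge x_{i_n}$, $f(\mathbf{x})=\sum_{j=1}^{n-1}F(\{i_1,\dots,i_j\})(x_{i_j}-x_{i_{j+1}})+F([n])x_{i_n}$. A set function $F$ is submodular if $F(\mathcal{S}_1)+F(\mathcal{S}_2)\ge F(\mathcal{S}_1\cup\mathcal{S}_2)+F(\mathcal{S}_1\cap\mathcal{S}_2)$ for all $\mathcal{S}_1,\mathcal{S}_2$. $\mathcal{P}_{a,b}(\bar{\mathbf{x}})$ denotes the vector obtained by projecting each entry of $\bar{\mathbf{x}}$ onto the interval $[a,b]$. *)

theory Defs
  imports Complex_Main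
begin

definition sorted_enum :: "'a set \<Rightarrow> ('a \<Rightarrow> real) \<Rightarrow> 'a list" where
  "sorted_enum S x = (SOME l. distinct l \<and> set l = S \<and> sorted_wrt (\<lambda>i j. x i \<ge> x j) l)"

definition lovasz :: "('a set \<Rightarrow> real) \<Rightarrow> 'a set \<Rightarrow> ('a \<Rightarrow> real) \<Rightarrow> real" where
  "lovasz F S x = (if S = {} then 0 else
     (let l = sorted_enum S x; n = length l in
       (\<Sum>j<n - 1. F (set (take (Suc j) l)) * (x (l ! j) - x (l ! Suc j)))
       + F S * x (l ! (n - 1))))"

definition submodular_on :: "'a set \<Rightarrow> ('a set \<Rightarrow> real) \<Rightarrow> bool" where
  "submodular_on S F = (\<forall>S1 S2. S1 \<subseteq> S \<longrightarrow> S2 \<subseteq> S \<longrightarrow>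
      F S1 + F S2 \<ge> F (S1 \<union> S2) + F (S1 \<inter> S2))"

definition proj :: "real \<Rightarrow> real \<Rightarrow> ('a \<Rightarrow> real) \<Rightarrow> ('a \<Rightarrow> real)" where
  "proj a b xb = (\<lambda>i. max a (min b (xb i)))"

definition joint :: "'a set \<Rightarrow> ('a \<Rightarrow> real) \<Rightarrow> ('a \<Rightarrow> real) \<Rightarrow> ('a \<Rightarrow> real)" where
  "joint V x xb = (\<lambda>i. if i \<in> V then x i else xb i)"

definition is_min_value :: "real \<Rightarrow> 'b set \<Rightarrow> ('b \<Rightarrow> real) \<Rightarrow> bool" where
  "is_min_value m A f = ((\<exists>y\<in>A. f y = m) \<and> (\<forall>y\<in>A. m \<le> f y))"

end

theory Submission
  imports Defs "HOL-Analysis.Analysis"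
begin

(*
  With G vanishing on the empty and on the full ground set, the Lovasz extension equals the
  integral, over any interval containing all values, of t \<mapsto> G {i. t \<le> y i}. The upper level set
  of a joint vector at t is {v \<in> V. t \<le> x v} \<union> B_t with B_t \<subseteq> W. If the W-part also takes values
  in [a, b], this set is everything for t \<le> a and empty for t > b, where G takes its minimal
  value 0; so only t \<in> (a, b] matters, and there projecting onto [a, b] does not change the
  level sets. This gives the inequality.

  For the minimum, submodularity makes the minimisers B of G (Y \<union> B) over B \<subseteq> W closed under
  union, and the largest minimiser grows with Y. Choosing B_t as the largest minimiser for
  Y = {v \<in> V. t \<le> x v} gives a decreasing family of sets, which is the family of level sets of a
  vector with values in [a, b]; that vector minimises the integrand for every t.
*)

lemma sorted_enum:
  assumes "finite S"
  shows "distinct (sorted_enum S y)" "set (sorted_enum S y) = S"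
    "sorted_wrt (\<lambda>i j. y i \<ge> y j) (sorted_enum S y)"
proof -
  obtain xs where xs: "set xs = S" "distinct xs"
    using finite_distinct_list[OF assms] by blast
  let ?l = "sort_key (\<lambda>i. - y i) xs"
  have "sorted_wrt (\<lambda>i j. y i \<ge> y j) ?l"
    using sorted_sort_key[of "\<lambda>i. - y i" xs] by (simp add: sorted_map)
  with xs have "\<exists>l. distinct l \<and> set l = S \<and> sorted_wrt (\<lambda>i j. y i \<ge> y j) l"
    by (intro exI[of _ ?l]) simp
  from someI_ex[OF this] show "distinct (sorted_enum S y)" "set (sorted_enum S y) = S"
    "sorted_wrt (\<lambda>i j. y i \<ge> y j) (sorted_enum S y)"
    unfolding sorted_enum_def by simp_all
qed

lemma sorted_wrt_ge_nth_antimono: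
  fixes y :: "'a \<Rightarrow> 'b::linorder"
  assumes "sorted_wrt (\<lambda>i j. y i \<ge> y j) l" "p \<le> q" "q < length l"
  shows "y (l ! q) \<le> y (l ! p)"
  using assms sorted_wrt_nth_less[OF assms(1), of p q] by (cases "p = q") auto

lemma upper_level_set_sorted_wrt_ge:
  fixes y :: "'a \<Rightarrow> 'b::linorder"
  assumes sorted: "sorted_wrt (\<lambda>i j. y i \<ge> y j) l" and k: "Suc k < length l"
    and t: "y (l ! Suc k) < t" "t \<le> y (l ! k)"
  shows "{i \<in> set l. t \<le> y i} = set (take (Suc k) l)"
proof (intro set_eqI iffI)
  fix i assume "i \<in> {i \<in> set l. t \<le> y i}"
  then obtain p where p: "p < length l" "i = l ! p" "t \<le> y (l ! p)"
    by (auto simp: in_set_conv_nth)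
  have "p \<le> k"
    using sorted_wrt_ge_nth_antimono[OF sorted, of "Suc k" p] p t by (cases "p \<le> k") auto
  with p show "i \<in> set (take (Suc k) l)"
    by (auto simp: in_set_conv_nth intro!: exI[of _ p])
next
  fix i assume "i \<in> set (take (Suc k) l)"
  then obtain p where p: "p \<le> k" "i = l ! p"
    by (auto simp: in_set_conv_nth less_Suc_eq_le)
  with k t sorted_wrt_ge_nth_antimono[OF sorted, of p k] show "i \<in> {i \<in> set l. t \<le> y i}"
    by auto
qed

lemma has_integral_upper_levels_sorted_wrt_ge:
  fixes F :: "'a set \<Rightarrow> real" and y :: "'a \<Rightarrow> real"
  assumes sorted: "sorted_wrt (\<lambda>i j. y i \<ge> y j) l" and k: "k < length l"
    and F0: "F {} = 0" and hi: "y (l ! 0) \<le> hi"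
  shows "((\<lambda>t. F {i \<in> set l. t \<le> y i}) has_integral
           (\<Sum>j<k. F (set (take (Suc j) l)) * (y (l ! j) - y (l ! Suc j)))) {y (l ! k)..hi}"
  using k
proof (induction k)
  case 0
  have levels: "F {i \<in> set l. t \<le> y i} = 0" if "t \<in> {y (l ! 0)..hi} - {y (l ! 0)}" for t
  proof -
    have "{i \<in> set l. t \<le> y i} = {}"
      using that sorted_wrt_ge_nth_antimono[OF sorted, of 0] by (force simp: in_set_conv_nth)
    then show ?thesis by (simp only: F0)
  qed
  show ?case
    using has_integral_spike_finite[of "{y (l ! 0)}" "{y (l ! 0)..hi}"
        "\<lambda>t. F {i \<in> set l. t \<le> y i}" "\<lambda>_. 0"] levels
    by simp
next
  case (Suc k)
  let ?T = "set (take (Suc k) l)"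
  have le: "y (l ! Suc k) \<le> y (l ! k)" "y (l ! k) \<le> hi"
    using sorted_wrt_ge_nth_antimono[OF sorted, of k "Suc k"]
      sorted_wrt_ge_nth_antimono[OF sorted, of 0 k] Suc.prems hi
    by auto
  have levels: "F {i \<in> set l. t \<le> y i} = F ?T"
    if "t \<in> {y (l ! Suc k)..y (l ! k)} - {y (l ! Suc k)}" for t
    using that upper_level_set_sorted_wrt_ge[OF sorted Suc.prems] by simp
  have "((\<lambda>t. F {i \<in> set l. t \<le> y i}) has_integral F ?T * (y (l ! k) - y (l ! Suc k)))
      {y (l ! Suc k)..y (l ! k)}"
    using has_integral_spike_finite[of "{y (l ! Suc k)}" "{y (l ! Suc k)..y (l ! k)}"
        "\<lambda>t. F {i \<in> set l. t \<le> y i}" "\<lambda>_. F ?T"] levels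
      has_integral_const_real[of "F ?T" "y (l ! Suc k)" "y (l ! k)"] le(1)
    by (simp add: mult.commute)
  from has_integral_combine[OF le this Suc.IH] Suc.prems show ?case
    by (simp add: add.commute)
qed

lemma lovasz_has_integral_upper_levels:
  fixes F :: "'a set \<Rightarrow> real"
  assumes fin: "finite S" and ne: "S \<noteq> {}" and F0: "F {} = 0" and FS: "F S = 0"
    and bounds: "\<forall>i\<in>S. lo \<le> y i \<and> y i \<le> hi"
  shows "((\<lambda>t. F {i \<in> S. t \<le> y i}) has_integral lovasz F S y) {lo..hi}"
proof -
  define l where "l = sorted_enum S y"
  define n where "n = length l"
  have sorted: "sorted_wrt (\<lambda>i j. y i \<ge> y j) l" and set_l: "set l = S"
    using sorted_enum[OF fin] unfolding l_def by auto
  have n: "n - 1 < n"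
    using ne set_l unfolding n_def by (cases l) auto
  have in_S: "l ! p \<in> S" if "p < n" for p
    using that set_l nth_mem unfolding n_def by blast
  have lo: "lo \<le> y (l ! (n - 1))" and hi: "y (l ! 0) \<le> hi"
    using bounds in_S n by auto
  have upper: "((\<lambda>t. F {i \<in> S. t \<le> y i}) has_integral lovasz F S y) {y (l ! (n - 1))..hi}"
    using has_integral_upper_levels_sorted_wrt_ge[where k = "n - 1" and F = F, OF sorted _ F0 hi] n ne FS
    unfolding lovasz_def l_def[symmetric] n_def[symmetric] set_l Let_def by simp
  have "F {i \<in> S. t \<le> y i} = 0" if "t \<in> {lo..y (l ! (n - 1))}" for t
  proof -
    have "t \<le> y (l ! p)" if "p < n" for p
    proof -
      have "y (l ! (n - 1)) \<le> y (l ! p)"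
        using that n sorted_wrt_ge_nth_antimono[OF sorted, of p "n - 1"] unfolding n_def by simp
      with \<open>t \<in> _\<close> show ?thesis by simp
    qed
    then have "{i \<in> S. t \<le> y i} = S"
      by (auto simp: set_l[symmetric] in_set_conv_nth n_def)
    with FS show ?thesis by simp
  qed
  then have lower: "((\<lambda>t. F {i \<in> S. t \<le> y i}) has_integral 0) {lo..y (l ! (n - 1))}"
    using has_integral_spike_finite[of "{}" "{lo..y (l ! (n - 1))}"
        "\<lambda>t. F {i \<in> S. t \<le> y i}" "\<lambda>_. 0"] by simp
  have "y (l ! (n - 1)) \<le> hi"
    using hi sorted_wrt_ge_nth_antimono[OF sorted, of 0 "n - 1"] n unfolding n_def by simp
  from has_integral_combine[OF lo this lower upper] show ?thesis
    by simp
qed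

lemma lovasz_mono_upper_levels:
  fixes F :: "'a set \<Rightarrow> real"
  assumes fin: "finite S" and ne: "S \<noteq> {}" and F0: "F {} = 0" and FS: "F S = 0"
    and le: "\<And>t. F {i \<in> S. t \<le> y i} \<le> F {i \<in> S. t \<le> z i}"
  shows "lovasz F S y \<le> lovasz F S z"
proof -
  define lo where "lo = Min (y ` S \<union> z ` S)"
  define hi where "hi = Max (y ` S \<union> z ` S)"
  have "\<forall>i\<in>S. lo \<le> y i \<and> y i \<le> hi" "\<forall>i\<in>S. lo \<le> z i \<and> z i \<le> hi"
    using fin unfolding lo_def hi_def by auto
  from this[THEN lovasz_has_integral_upper_levels[OF fin ne F0 FS]] show ?thesis
    by (rule has_integral_le) (rule le)
qed

lemma lovasz_mono_upper_levels_within: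
  fixes F :: "'a set \<Rightarrow> real"
  assumes "finite S" and "S \<noteq> {}" and F0: "F {} = 0" and FS: "F S = 0"
    and nonneg: "\<forall>T. T \<subseteq> S \<longrightarrow> F T \<ge> 0"
    and bounds: "\<forall>i\<in>S. a \<le> y i \<and> y i \<le> b"
    and le: "\<And>t. a < t \<Longrightarrow> t \<le> b \<Longrightarrow> F {i \<in> S. t \<le> y i} \<le> F {i \<in> S. t \<le> z i}"
  shows "lovasz F S y \<le> lovasz F S z"
proof (rule lovasz_mono_upper_levels[OF assms(1-4)])
  fix t
  have z: "0 \<le> F {i \<in> S. t \<le> z i}"
    using nonneg by auto
  consider "t \<le> a" | "a < t" "t \<le> b" | "b < t"
    by fastforce
  then show "F {i \<in> S. t \<le> y i} \<le> F {i \<in> S. t \<le> z i}"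
  proof cases
    case 1
    with bounds have "{i \<in> S. t \<le> y i} = S" by force
    with FS z show ?thesis by simp
  next
    case 2
    then show ?thesis by (rule le)
  next
    case 3
    with bounds have "{i \<in> S. t \<le> y i} = {}" by force
    then have "F {i \<in> S. t \<le> y i} = 0" by (simp only: F0)
    with z show ?thesis by simp
  qed
qed

definition min_completions :: "('a set \<Rightarrow> real) \<Rightarrow> 'a set \<Rightarrow> 'a set \<Rightarrow> 'a set set" where
  "min_completions G W Y = {B. B \<subseteq> W \<and> (\<forall>B'. B' \<subseteq> W \<longrightarrow> G (Y \<union> B) \<le> G (Y \<union> B'))}"

definition max_min_completion :: "('a set \<Rightarrow> real) \<Rightarrow> 'a set \<Rightarrow> 'a set \<Rightarrow> 'a set" where
  "max_min_completion G W Y = \<Union> (min_completions G W Y)"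

lemma submodular_onD:
  assumes "submodular_on S F" "A \<subseteq> S" "B \<subseteq> S"
  shows "F (A \<union> B) + F (A \<inter> B) \<le> F A + F B"
  using assms unfolding submodular_on_def by blast

lemma min_completions_nonempty:
  assumes "finite W"
  shows "min_completions G W Y \<noteq> {}"
proof -
  obtain B where "B \<in> Pow W" "\<forall>B'\<in>Pow W. \<not> G (Y \<union> B') < G (Y \<union> B)"
    using arg_min_if_finite[of "Pow W" "\<lambda>B. G (Y \<union> B)"] assms by blast
  then have "B \<in> min_completions G W Y"
    unfolding min_completions_def by (auto simp: not_less)
  then show ?thesis by blast
qed

lemma min_completions_if_le:
  assumes "B \<in> min_completions G W Y" and "B' \<subseteq> W" and "G (Y \<union> B') \<le> G (Y \<union> B)"
  shows "B' \<in> min_completions G W Y"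
  using assms unfolding min_completions_def by (blast intro: order_trans)

lemma min_completions_Un:
  assumes sub: "submodular_on S G" and "Y \<subseteq> S" "W \<subseteq> S"
    and B1: "B1 \<in> min_completions G W Y" and B2: "B2 \<in> min_completions G W Y"
  shows "B1 \<union> B2 \<in> min_completions G W Y"
proof (rule min_completions_if_le[OF B2])
  have W: "B1 \<subseteq> W" "B2 \<subseteq> W"
    using B1 B2 unfolding min_completions_def by auto
  then show "B1 \<union> B2 \<subseteq> W" by blast
  have "(Y \<union> B1) \<union> (Y \<union> B2) = Y \<union> (B1 \<union> B2)" "(Y \<union> B1) \<inter> (Y \<union> B2) = Y \<union> (B1 \<inter> B2)"
    by blast+
  then have "G (Y \<union> (B1 \<union> B2)) + G (Y \<union> (B1 \<inter> B2)) \<le> G (Y \<union> B1) + G (Y \<union> B2)"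
    using submodular_onD[OF sub, of "Y \<union> B1" "Y \<union> B2"] W assms(2,3) by auto
  moreover have "G (Y \<union> B1) \<le> G (Y \<union> (B1 \<inter> B2))"
    using B1 W unfolding min_completions_def by blast
  ultimately show "G (Y \<union> (B1 \<union> B2)) \<le> G (Y \<union> B2)" by linarith
qed

lemma max_min_completion_in:
  assumes "finite W" and "submodular_on S G" "Y \<subseteq> S" "W \<subseteq> S"
  shows "max_min_completion G W Y \<in> min_completions G W Y"
proof -
  have "\<Union> Bs \<in> min_completions G W Y"
    if "finite Bs" "Bs \<noteq> {}" "Bs \<subseteq> min_completions G W Y" for Bs
    using that by (induction rule: finite_ne_induct) (auto intro: min_completions_Un[OF assms(2-4)])
  moreover have "finite (min_completions G W Y)"
    by (rule finite_subset[of _ "Pow W"]) (auto simp: min_completions_def assms(1))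
  ultimately show ?thesis
    using min_completions_nonempty[OF assms(1)] unfolding max_min_completion_def by blast
qed

lemma max_min_completion_mono:
  assumes "finite W" and sub: "submodular_on S G"
    and "Y \<subseteq> Y'" "Y' \<subseteq> S" "W \<subseteq> S" "Y' \<inter> W = {}"
  shows "max_min_completion G W Y \<subseteq> max_min_completion G W Y'"
proof -
  define B B' where "B = max_min_completion G W Y" and "B' = max_min_completion G W Y'"
  have B: "B \<in> min_completions G W Y" and B': "B' \<in> min_completions G W Y'"
    using max_min_completion_in[OF assms(1,2)] assms(3-5) unfolding B_def B'_def by auto
  then have W: "B \<subseteq> W" "B' \<subseteq> W"
    unfolding min_completions_def by auto
  have eqs: "(Y' \<union> B') \<union> (Y \<union> B) = Y' \<union> (B' \<union> B)"
      "(Y' \<union> B') \<inter> (Y \<union> B) = Y \<union> (B' \<inter> B)"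
    using assms(3,6) W by blast+
  have "Y' \<union> B' \<subseteq> S" "Y \<union> B \<subseteq> S"
    using W assms(3-5) by auto
  from submodular_onD[OF sub this]
  have "G (Y' \<union> (B' \<union> B)) + G (Y \<union> (B' \<inter> B)) \<le> G (Y' \<union> B') + G (Y \<union> B)"
    unfolding eqs .
  moreover have "G (Y \<union> B) \<le> G (Y \<union> (B' \<inter> B))"
    using B W unfolding min_completions_def by blast
  ultimately have "B' \<union> B \<in> min_completions G W Y'"
    using W by (intro min_completions_if_le[OF B']) auto
  then have "B \<subseteq> B'"
    unfolding B'_def max_min_completion_def by blast
  then show ?thesis
    unfolding B_def B'_def .
qed

lemma upper_level_Max_realization:
  fixes x :: "'a \<Rightarrow> real" and P :: "'a set \<Rightarrow> 'b set"
  assumes fin: "finite V" and mono: "\<And>Y Y'. Y \<subseteq> Y' \<Longrightarrow> Y' \<subseteq> V \<Longrightarrow> P Y \<subseteq> P Y'"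
    and "a < t" and "\<exists>v\<in>V. t \<le> x v"
  shows "t \<le> Max (insert a (x ` {v \<in> V. i \<in> P {w \<in> V. x v \<le> x w}}))
    \<longleftrightarrow> i \<in> P {v \<in> V. t \<le> x v}"
proof -
  have "t \<le> Max (insert a (x ` {v \<in> V. i \<in> P {w \<in> V. x v \<le> x w}}))
      \<longleftrightarrow> (\<exists>v\<in>V. i \<in> P {w \<in> V. x v \<le> x w} \<and> t \<le> x v)"
    using fin \<open>a < t\<close> by (subst Max_ge_iff) auto
  also have "\<dots> \<longleftrightarrow> i \<in> P {v \<in> V. t \<le> x v}"
  proof
    assume "\<exists>v\<in>V. i \<in> P {w \<in> V. x v \<le> x w} \<and> t \<le> x v"
    then obtain v where "i \<in> P {w \<in> V. x v \<le> x w}" "t \<le> x v" by blast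
    moreover have "{w \<in> V. x v \<le> x w} \<subseteq> {v \<in> V. t \<le> x v}"
      using \<open>t \<le> x v\<close> by auto
    ultimately show "i \<in> P {v \<in> V. t \<le> x v}"
      using mono by blast
  next
    assume i: "i \<in> P {v \<in> V. t \<le> x v}"
    let ?U = "{v \<in> V. t \<le> x v}"
    have U: "finite ?U" "?U \<noteq> {}"
      using fin assms(4) by auto
    have "Min (x ` ?U) \<in> x ` ?U"
      using U by simp
    then obtain w where w: "w \<in> ?U" "x w = Min (x ` ?U)"
      by auto
    then have "t \<le> x w" "\<forall>v\<in>?U. x w \<le> x v"
      using U by auto
    then have "{v \<in> V. x w \<le> x v} = ?U"
      by auto
    with i w \<open>t \<le> x w\<close> show "\<exists>v\<in>V. i \<in> P {w \<in> V. x v \<le> x w} \<and> t \<le> x v"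
      by (intro bexI[of _ w]) simp_all
  qed
  finally show ?thesis .
qed

lemma upper_level_set_joint:
  assumes "V \<inter> W = {}"
  shows "{i \<in> V \<union> W. t \<le> joint V x y i} = {v \<in> V. t \<le> x v} \<union> {i \<in> W. t \<le> y i}"
  using assms unfolding joint_def by auto

lemma upper_level_proj:
  assumes "a < t" "t \<le> b"
  shows "t \<le> proj a b y i \<longleftrightarrow> t \<le> y i"
  using assms unfolding proj_def by auto

lemma is_min_valueI:
  assumes "y \<in> A" "\<And>z. f y \<le> f z"
  shows "is_min_value (f y) A f"
  using assms unfolding is_min_value_def by blast

lemma lovasz_joint_proj_le:
  fixes G :: "'a set \<Rightarrow> real"
  assumes "finite V" "finite W" "V \<inter> W = {}" "V \<noteq> {}"
    and "\<forall>S. S \<subseteq> V \<union> W \<longrightarrow> G S \<ge> 0" "G {} = 0" "G (V \<union> W) = 0"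
    and x: "\<forall>v\<in>V. a \<le> x v \<and> x v \<le> b" and "a \<le> b"
  shows "lovasz G (V \<union> W) (joint V x (proj a b xb)) \<le> lovasz G (V \<union> W) (joint V x xb)"
proof (rule lovasz_mono_upper_levels_within[where a = a and b = b])
  show "\<forall>i\<in>V \<union> W. a \<le> joint V x (proj a b xb) i \<and> joint V x (proj a b xb) i \<le> b"
    using x \<open>a \<le> b\<close> unfolding joint_def proj_def by auto
  fix t assume "a < t" "t \<le> b"
  then show "G {i \<in> V \<union> W. t \<le> joint V x (proj a b xb) i} \<le> G {i \<in> V \<union> W. t \<le> joint V x xb i}"
    unfolding upper_level_set_joint[OF \<open>V \<inter> W = {}\<close>] by (simp add: upper_level_proj)
qed (use assms in auto)

lemma lovasz_joint_min_in_box: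
  fixes G :: "'a set \<Rightarrow> real"
  assumes finV: "finite V" and finW: "finite W" and disj: "V \<inter> W = {}" and "V \<noteq> {}"
    and sub: "submodular_on (V \<union> W) G"
    and "\<forall>S. S \<subseteq> V \<union> W \<longrightarrow> G S \<ge> 0" "G {} = 0" "G (V \<union> W) = 0"
    and x: "\<forall>v\<in>V. a \<le> x v \<and> x v \<le> b" and "b \<in> x ` V" and "a \<le> b"
  shows "\<exists>xs. (\<forall>i\<in>W. a \<le> xs i \<and> xs i \<le> b) \<and>
    (\<forall>xb. lovasz G (V \<union> W) (joint V x xs) \<le> lovasz G (V \<union> W) (joint V x xb))"
proof -
  define M where "M Y = max_min_completion G W Y" for Y
  define xs where "xs i = Max (insert a (x ` {v \<in> V. i \<in> M {w \<in> V. x v \<le> x w}}))" for i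
  have M: "M Y \<in> min_completions G W Y" if "Y \<subseteq> V" for Y
    using max_min_completion_in[OF finW sub] that unfolding M_def by blast
  have M_mono: "M Y \<subseteq> M Y'" if "Y \<subseteq> Y'" "Y' \<subseteq> V" for Y Y'
    using max_min_completion_mono[OF finW sub] that disj unfolding M_def by blast
  have box: "a \<le> xs i \<and> xs i \<le> b" for i
    using finV x \<open>a \<le> b\<close> unfolding xs_def by (auto simp: Max_le_iff)
  have levels: "{i \<in> W. t \<le> xs i} = M {v \<in> V. t \<le> x v}" if "a < t" "t \<le> b" for t
  proof -
    have "t \<le> xs i \<longleftrightarrow> i \<in> M {v \<in> V. t \<le> x v}" for i
      unfolding xs_def
      by (rule upper_level_Max_realization[OF finV M_mono \<open>a < t\<close>])
        (use \<open>b \<in> x ` V\<close> \<open>t \<le> b\<close> in auto)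
    moreover have "M {v \<in> V. t \<le> x v} \<subseteq> W"
      using M[of "{v \<in> V. t \<le> x v}"] unfolding min_completions_def by blast
    ultimately show ?thesis by blast
  qed
  have "lovasz G (V \<union> W) (joint V x xs) \<le> lovasz G (V \<union> W) (joint V x xb)" for xb
  proof (rule lovasz_mono_upper_levels_within[where a = a and b = b])
    show "\<forall>i\<in>V \<union> W. a \<le> joint V x xs i \<and> joint V x xs i \<le> b"
      using x box unfolding joint_def by auto
    fix t assume "a < t" "t \<le> b"
    then show "G {i \<in> V \<union> W. t \<le> joint V x xs i} \<le> G {i \<in> V \<union> W. t \<le> joint V x xb i}"
      using M[of "{v \<in> V. t \<le> x v}"]
      unfolding upper_level_set_joint[OF disj] levels[OF \<open>a < t\<close> \<open>t \<le> b\<close>] min_completions_def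
      by auto
  qed (use assms in auto)
  with box show ?thesis by blast
qed

theorem lemma3:
  fixes V W :: "'a set" and G :: "'a set \<Rightarrow> real" and x :: "'a \<Rightarrow> real"
    and a b :: real
  assumes "finite V" and "finite W" and "V \<inter> W = {}" and "V \<noteq> {}"
    and "submodular_on (V \<union> W) G"
    and "\<forall>S. S \<subseteq> V \<union> W \<longrightarrow> G S \<ge> 0"
    and "G {} = 0" and "G (V \<union> W) = 0"
    and "a = Min (x ` V)" and "b = Max (x ` V)"
  shows "(\<forall>xb. lovasz G (V \<union> W) (joint V x xb)
              \<ge> lovasz G (V \<union> W) (joint V x (proj a b xb)))
       \<and> (\<forall>a' b'. a' < a \<longrightarrow> b' > b \<longrightarrow>
            (\<exists>m. is_min_value m UNIV (\<lambda>xb. lovasz G (V \<union> W) (joint V x xb))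
               \<and> is_min_value m {xb. \<forall>i\<in>W. a' \<le> xb i \<and> xb i \<le> b'}
                   (\<lambda>xb. lovasz G (V \<union> W) (joint V x xb))
               \<and> is_min_value m {xb. \<forall>i\<in>W. a \<le> xb i \<and> xb i \<le> b}
                   (\<lambda>xb. lovasz G (V \<union> W) (joint V x xb))))"
proof -
  have x: "\<forall>v\<in>V. a \<le> x v \<and> x v \<le> b" and "b \<in> x ` V" and "a \<le> b"
    using assms(1,4,9,10) by auto
  obtain xs where box: "\<forall>i\<in>W. a \<le> xs i \<and> xs i \<le> b"
    and min: "\<And>xb. lovasz G (V \<union> W) (joint V x xs) \<le> lovasz G (V \<union> W) (joint V x xb)"
    using lovasz_joint_min_in_box[OF assms(1-8) x \<open>b \<in> x ` V\<close> \<open>a \<le> b\<close>] by blast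
  show ?thesis
  proof (intro conjI allI impI exI[of _ "lovasz G (V \<union> W) (joint V x xs)"] is_min_valueI min)
    show "lovasz G (V \<union> W) (joint V x (proj a b xb)) \<le> lovasz G (V \<union> W) (joint V x xb)" for xb
      using lovasz_joint_proj_le[OF assms(1-4,6-8) x \<open>a \<le> b\<close>] .
  qed (use box in auto)
qed

end
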